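(* For every $n$, $\mathrm{ex}(n,(M,C_5),K_3)=\mathcal N(M,T_2(n))+\mathcal N(C_5,T_2(n))$ and $\mathrm{ex}(n,(M',C_5),K_3)=\mathcal N(M',T_2(n))+\mathcal N(C_5,T_2(n))$.
   Context: $M$ is the five-vertex graph consisting of two independent edges and an isolated vertex; $M'$ is the five-vertex graph consisting of a path on three vertices and a disjoint edge; $C_5$ is the 5-cycle. $T_2(n)$ is the complete bipartite graph on $n$ vertices with parts of sizes $\lfloor n/2\rfloor$, $\lceil n/2\rceil$. $\mathcal N(H,G)$ is the number of subgraphs of $G$ isomorphic to $H$; $\mathrm{ex}(n,(H_1,H_2),K_3)$ is the maximum of $\mathcal N(H_1,G)+\mathcal N(H_2,G)$ over triangle-free $n$-vertex graphs $G$. *)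

theory Defs
  imports Main
begin

type_synonym 'a graph = "'a set \<times> 'a set set"

definition is_graph :: "'a graph \<Rightarrow> bool" where
  "is_graph G \<longleftrightarrow> finite (fst G) \<and> (\<forall>e\<in>snd G. card e = 2 \<and> e \<subseteq> fst G)"

definition graph_iso :: "'a graph \<Rightarrow> 'b graph \<Rightarrow> bool" where
  "graph_iso H G \<longleftrightarrow> (\<exists>f. bij_betw f (fst H) (fst G) \<and> (\<lambda>e. f ` e) ` snd H = snd G)"

definition subgraphs :: "'a graph \<Rightarrow> 'a graph set" where
  "subgraphs G = {(V', E'). V' \<subseteq> fst G \<and> E' \<subseteq> snd G \<and> (\<forall>e\<in>E'. e \<subseteq> V')}"

definition num_copies :: "'b graph \<Rightarrow> 'a graph \<Rightarrow> nat" where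
  "num_copies H G = card {S \<in> subgraphs G. graph_iso H S}"

definition triangle_free :: "'a graph \<Rightarrow> bool" where
  "triangle_free G \<longleftrightarrow> \<not> (\<exists>a b c. {a,b} \<in> snd G \<and> {b,c} \<in> snd G \<and> {a,c} \<in> snd G
      \<and> a \<noteq> b \<and> b \<noteq> c \<and> a \<noteq> c)"

definition ex2_K3 :: "nat \<Rightarrow> nat graph \<Rightarrow> nat graph \<Rightarrow> nat" where
  "ex2_K3 n H1 H2 = Max {num_copies H1 G + num_copies H2 G | G.
      is_graph G \<and> fst G = {..<n} \<and> triangle_free G}"

definition T2 :: "nat \<Rightarrow> nat graph" where
  "T2 n = ({..<n}, {{a, b} | a b. a < n div 2 \<and> n div 2 \<le> b \<and> b < n})"

definition graph_M :: "nat graph" where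
  "graph_M = ({0..4}, {{0,1},{2,3}})"

definition graph_M' :: "nat graph" where
  "graph_M' = ({0..4}, {{0,1},{1,2},{3,4}})"

definition graph_C5 :: "nat graph" where
  "graph_C5 = ({0..4}, {{0,1},{1,2},{2,3},{3,4},{4,0}})"

end

theory Submission
  imports Defs "HOL-Analysis.Convex"
begin

(* Count labelled copies, i.e. ordered 5-tuples of distinct vertices realising the pattern.
   Write n for the number of vertices, A for the number of arcs (ordered adjacent pairs) and
   S for the sum of the squared degrees. Every graph has exactly (n-4)(A(A+2)-4S) labelled
   copies of M, which is 8 N(M,G). In a triangle-free graph a labelled 5-cycle (a,b,c,d,w) is
   determined by the arc (a,b), a vertex d adjacent to neither a nor b, and common neighbours
   c of b,d and w of a,d; since N(a) and N(b) are disjoint, AM-GM gives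
   40 N(C5,G) <= (n-3)^2 (nA-2S). Cauchy-Schwarz (A^2 <= nS) and deg v (n - deg v) <= n^2/4
   reduce N(M,G) + N(C5,G) <= N(M,T2(n)) to a polynomial inequality in n, A, S, which is
   verified by splitting on whether G has at least n^2/5 edges.
   A labelled copy of M' is a labelled copy of M whose isolated vertex is adjacent to the
   second vertex of the first edge. In a triangle-free graph that vertex is adjacent to at
   most one end of the edge, so N(M',G) <= N(M,G); in T2(n) it is adjacent to exactly one,
   so N(M',T2(n)) = N(M,T2(n)). *)

section \<open>Counting copies through labelled tuples\<close>

lemma card_eq_sum_card_fibres:
  assumes "finite A"
  shows "card A = (\<Sum>b\<in>f ` A. card {x\<in>A. f x = b})"
proof -
  have A: "A = (\<Union>b\<in>f ` A. {x\<in>A. f x = b})" by auto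
  show ?thesis
    by (subst A, rule card_UN_disjoint) (use assms in auto)
qed

lemma card_eq_mult_card_image:
  assumes "finite A" and "\<And>x. x \<in> A \<Longrightarrow> card {y\<in>A. f y = f x} = k"
  shows "card A = k * card (f ` A)"
proof -
  have "(\<Sum>b\<in>f ` A. card {x\<in>A. f x = b}) = (\<Sum>b\<in>f ` A. k)"
    using assms(2) by (intro sum.cong) auto
  then show ?thesis
    using card_eq_sum_card_fibres[OF assms(1), of f] by simp
qed

lemma mult_card_image_le_card:
  assumes "finite A" and "\<And>x. x \<in> A \<Longrightarrow> k \<le> card {y\<in>A. f y = f x}"
  shows "k * card (f ` A) \<le> card A"
proof -
  have "(\<Sum>b\<in>f ` A. k) \<le> (\<Sum>b\<in>f ` A. card {x\<in>A. f x = b})"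
    using assms(2) by (intro sum_mono) auto
  then show ?thesis
    using card_eq_sum_card_fibres[OF assms(1), of f] by (simp add: mult.commute)
qed

lemma num_copies_eq_0_if_card_less:
  assumes "finite (fst G)" and "card (fst G) < card (fst H)"
  shows "num_copies H G = 0"
proof -
  have "{S \<in> subgraphs G. graph_iso H S} = {}"
  proof (rule equals0I)
    fix S assume S: "S \<in> {S \<in> subgraphs G. graph_iso H S}"
    then have "card (fst H) = card (fst S)"
      unfolding graph_iso_def by (auto intro: bij_betw_same_card)
    also have "\<dots> \<le> card (fst G)"
      using S assms(1) unfolding subgraphs_def by (auto intro: card_mono)
    finally show False using assms(2) by simp
  qed
  then show ?thesis unfolding num_copies_def by (simp only: card.empty)
qed

type_synonym 'a quint = "'a \<times> 'a \<times> 'a \<times> 'a \<times> 'a"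

definition quint_nth :: "'a quint \<Rightarrow> nat \<Rightarrow> 'a" where
  "quint_nth = (\<lambda>(a, b, c, d, w). nth [a, b, c, d, w])"

lemma atLeastAtMost_0_4: "{0..4::nat} = {0, 1, 2, 3, 4}"
  by auto

lemma quint_nth_image [simp]: "quint_nth (a, b, c, d, w) ` {0..4} = {a, b, c, d, w}"
  by (simp add: atLeastAtMost_0_4 quint_nth_def)

lemma inj_on_nth_iff_distinct: "inj_on (nth xs) {..<length xs} \<longleftrightarrow> distinct xs"
  by (auto simp: inj_on_def distinct_conv_nth intro: inj_on_nth)

lemma inj_on_quint_nth:
  "inj_on (quint_nth (a, b, c, d, w)) {0..4} \<longleftrightarrow> distinct [a, b, c, d, w]"
proof -
  have "{0..4} = {..<length [a, b, c, d, w]}" by auto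
  then show ?thesis
    using inj_on_nth_iff_distinct[of "[a, b, c, d, w]"] by (simp add: quint_nth_def)
qed

definition labelled_copies :: "nat set set \<Rightarrow> 'a graph \<Rightarrow> 'a quint set" where
  "labelled_copies EH G = {t. inj_on (quint_nth t) {0..4} \<and> quint_nth t ` {0..4} \<subseteq> fst G
     \<and> (\<forall>h\<in>EH. quint_nth t ` h \<in> snd G)}"

definition pattern_image :: "nat set set \<Rightarrow> 'a quint \<Rightarrow> 'a graph" where
  "pattern_image EH t = (quint_nth t ` {0..4}, image (quint_nth t) ` EH)"

lemma copies_eq_image_labelled_copies:
  assumes EH: "\<forall>h\<in>EH. h \<subseteq> {0..4}"
  shows "{S \<in> subgraphs G. graph_iso ({0..4::nat}, EH) S}
    = pattern_image EH ` labelled_copies EH G"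
proof (intro equalityI subsetI)
  fix S assume "S \<in> {S \<in> subgraphs G. graph_iso ({0..4::nat}, EH) S}"
  then obtain v where S: "S \<in> subgraphs G" and inj: "inj_on v {0..4}"
    and S_eq: "S = (v ` {0..4}, image v ` EH)"
    unfolding graph_iso_def bij_betw_def by (cases S) auto
  define t where "t = (v 0, v 1, v 2, v 3, v 4)"
  have t_v: "quint_nth t i = v i" if "i \<in> {0..4}" for i
    using that unfolding atLeastAtMost_0_4 by (auto simp: t_def quint_nth_def)
  have im: "quint_nth t ` h = v ` h" if "h \<subseteq> {0..4}" for h
    by (intro image_cong refl) (use that t_v in auto)
  have "image (quint_nth t) ` EH = image v ` EH"
    by (rule image_cong[OF refl]) (use EH im in auto)
  then have "pattern_image EH t = S"
    using S_eq im[of "{0..4}"] by (simp add: pattern_image_def)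
  moreover have "t \<in> labelled_copies EH G"
  proof -
    have "inj_on (quint_nth t) {0..4}"
      using inj inj_on_cong[of "{0..4}" "quint_nth t" v] t_v by blast
    moreover have "quint_nth t ` {0..4} \<subseteq> fst G" and "\<forall>h\<in>EH. quint_nth t ` h \<in> snd G"
      using S EH im unfolding S_eq subgraphs_def by auto
    ultimately show ?thesis unfolding labelled_copies_def by blast
  qed
  ultimately show "S \<in> pattern_image EH ` labelled_copies EH G" by blast
next
  fix S assume "S \<in> pattern_image EH ` labelled_copies EH G"
  then obtain t where t: "t \<in> labelled_copies EH G" and S: "S = pattern_image EH t" by blast
  have "graph_iso ({0..4::nat}, EH) S"
    using t unfolding S graph_iso_def bij_betw_def pattern_image_def labelled_copies_def by auto
  moreover have "quint_nth t ` h \<subseteq> quint_nth t ` {0..4}" if "h \<in> EH" for h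
    using EH that by blast
  then have "S \<in> subgraphs G"
    using t unfolding S subgraphs_def pattern_image_def labelled_copies_def by auto
  ultimately show "S \<in> {S \<in> subgraphs G. graph_iso ({0..4::nat}, EH) S}" by blast
qed

lemma mem_labelled_copies:
  "(a, b, c, d, w) \<in> labelled_copies EH G \<longleftrightarrow>
     distinct [a, b, c, d, w] \<and> {a, b, c, d, w} \<subseteq> fst G
     \<and> (\<forall>h\<in>EH. quint_nth (a, b, c, d, w) ` h \<in> snd G)"
  by (simp add: labelled_copies_def inj_on_quint_nth)

lemma finite_labelled_copies:
  assumes "finite (fst G)"
  shows "finite (labelled_copies EH G)"
proof (rule finite_subset)
  show "labelled_copies EH G \<subseteq> fst G \<times> fst G \<times> fst G \<times> fst G \<times> fst G"
  proof
    fix t assume "t \<in> labelled_copies EH G"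
    moreover obtain a b c d w where "t = (a, b, c, d, w)" by (cases t)
    ultimately show "t \<in> fst G \<times> fst G \<times> fst G \<times> fst G \<times> fst G"
      by (simp add: mem_labelled_copies)
  qed
qed (use assms in simp)

lemma num_copies_eq_card_labelled_copies:
  assumes EH: "\<forall>h\<in>EH. h \<subseteq> {0..4}" and "finite (fst G)"
    and "\<And>t. t \<in> labelled_copies EH G \<Longrightarrow>
      card {y \<in> labelled_copies EH G. pattern_image EH y = pattern_image EH t} = k"
  shows "k * num_copies ({0..4}, EH) G = card (labelled_copies EH G)"
proof -
  have "card (labelled_copies EH G) = k * card (pattern_image EH ` labelled_copies EH G)"
    by (rule card_eq_mult_card_image[OF finite_labelled_copies[OF assms(2)]]) (rule assms(3))
  then show ?thesis
    unfolding num_copies_def copies_eq_image_labelled_copies[OF EH] by simp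
qed

lemma num_copies_le_card_labelled_copies:
  assumes EH: "\<forall>h\<in>EH. h \<subseteq> {0..4}" and "finite (fst G)"
    and "\<And>t. t \<in> labelled_copies EH G \<Longrightarrow>
      k \<le> card {y \<in> labelled_copies EH G. pattern_image EH y = pattern_image EH t}"
  shows "k * num_copies ({0..4}, EH) G \<le> card (labelled_copies EH G)"
  unfolding num_copies_def copies_eq_image_labelled_copies[OF EH]
  by (rule mult_card_image_le_card[OF finite_labelled_copies[OF assms(2)]]) (rule assms(3))

definition labelled_M :: "'a graph \<Rightarrow> 'a quint set" where
  "labelled_M G = {(a, b, c, d, w). distinct [a, b, c, d, w] \<and> {a, b, c, d, w} \<subseteq> fst G
     \<and> {a, b} \<in> snd G \<and> {c, d} \<in> snd G}"

definition labelled_M' :: "'a graph \<Rightarrow> 'a quint set" where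
  "labelled_M' G = {(a, b, c, d, w). distinct [a, b, c, d, w] \<and> {a, b, c, d, w} \<subseteq> fst G
     \<and> {a, b} \<in> snd G \<and> {b, c} \<in> snd G \<and> {d, w} \<in> snd G}"

definition labelled_C5 :: "'a graph \<Rightarrow> 'a quint set" where
  "labelled_C5 G = {(a, b, c, d, w). distinct [a, b, c, d, w] \<and> {a, b, c, d, w} \<subseteq> fst G
     \<and> {a, b} \<in> snd G \<and> {b, c} \<in> snd G \<and> {c, d} \<in> snd G \<and> {d, w} \<in> snd G
     \<and> {w, a} \<in> snd G}"

lemma labelled_copies_graph_M: "labelled_copies (snd graph_M) G = labelled_M G"
proof (rule set_eqI)
  fix t :: "'a quint"
  obtain a b c d w where t: "t = (a, b, c, d, w)" by (cases t)
  show "t \<in> labelled_copies (snd graph_M) G \<longleftrightarrow> t \<in> labelled_M G"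
    unfolding t by (simp add: mem_labelled_copies labelled_M_def graph_M_def quint_nth_def)
qed

lemma labelled_copies_graph_M': "labelled_copies (snd graph_M') G = labelled_M' G"
proof (rule set_eqI)
  fix t :: "'a quint"
  obtain a b c d w where t: "t = (a, b, c, d, w)" by (cases t)
  show "t \<in> labelled_copies (snd graph_M') G \<longleftrightarrow> t \<in> labelled_M' G"
    unfolding t by (simp add: mem_labelled_copies labelled_M'_def graph_M'_def quint_nth_def)
qed

lemma labelled_copies_graph_C5: "labelled_copies (snd graph_C5) G = labelled_C5 G"
proof (rule set_eqI)
  fix t :: "'a quint"
  obtain a b c d w where t: "t = (a, b, c, d, w)" by (cases t)
  show "t \<in> labelled_copies (snd graph_C5) G \<longleftrightarrow> t \<in> labelled_C5 G"
    unfolding t by (simp add: mem_labelled_copies labelled_C5_def graph_C5_def quint_nth_def)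
qed

lemma pattern_image_M:
  "pattern_image (snd graph_M) (a, b, c, d, w) = ({a, b, c, d, w}, {{a, b}, {c, d}})"
  unfolding pattern_image_def quint_nth_image by (simp add: graph_M_def quint_nth_def)

lemma pattern_image_M':
  "pattern_image (snd graph_M') (a, b, c, d, w) = ({a, b, c, d, w}, {{a, b}, {b, c}, {d, w}})"
  unfolding pattern_image_def quint_nth_image by (simp add: graph_M'_def quint_nth_def)

lemma pattern_image_C5:
  "pattern_image (snd graph_C5) (a, b, c, d, w)
     = ({a, b, c, d, w}, {{a, b}, {b, c}, {c, d}, {d, w}, {w, a}})"
  unfolding pattern_image_def quint_nth_image by (simp add: graph_C5_def quint_nth_def)

lemma fibre_labelled_M:
  assumes t: "(a, b, c, d, w) \<in> labelled_M G"
  shows "{y \<in> labelled_M G. pattern_image (snd graph_M) y = pattern_image (snd graph_M) (a, b, c, d, w)}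
    = {(a, b, c, d, w), (b, a, c, d, w), (a, b, d, c, w), (b, a, d, c, w),
       (c, d, a, b, w), (d, c, a, b, w), (c, d, b, a, w), (d, c, b, a, w)}"
    (is "?F = ?orbit")
proof (intro equalityI subsetI)
  fix y assume y: "y \<in> ?F"
  obtain a' b' c' d' w' where y_eq: "y = (a', b', c', d', w')" by (cases y)
  from y t have dist: "distinct [a, b, c, d, w]" "distinct [a', b', c', d', w']"
    and V: "{a', b', c', d', w'} = {a, b, c, d, w}" and E: "{{a', b'}, {c', d'}} = {{a, b}, {c, d}}"
    by (auto simp: y_eq labelled_M_def pattern_image_M)
  have "({a', b'} = {a, b} \<and> {c', d'} = {c, d}) \<or> ({a', b'} = {c, d} \<and> {c', d'} = {a, b})"
    using E by (simp add: doubleton_eq_iff)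
  then have edges:
    "((a' = a \<and> b' = b) \<or> (a' = b \<and> b' = a)) \<and> ((c' = c \<and> d' = d) \<or> (c' = d \<and> d' = c)) \<or>
     ((a' = c \<and> b' = d) \<or> (a' = d \<and> b' = c)) \<and> ((c' = a \<and> d' = b) \<or> (c' = b \<and> d' = a))"
    by (simp add: doubleton_eq_iff)
  have "w' \<in> {a, b, c, d, w}" using V by blast
  then have "w' = w" using edges dist by auto
  then show "y \<in> ?orbit"
    using edges y_eq by auto
next
  fix y assume "y \<in> ?orbit"
  with t show "y \<in> ?F"
    by (auto simp: labelled_M_def pattern_image_M insert_commute)
qed

lemma finite_labelled_M: "finite (fst G) \<Longrightarrow> finite (labelled_M G)"
  using finite_labelled_copies[of G "snd graph_M"] by (simp add: labelled_copies_graph_M)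

lemma num_copies_M:
  assumes "finite (fst G)"
  shows "8 * num_copies graph_M G = card (labelled_M G)"
proof -
  have "8 * num_copies ({0..4}, snd graph_M) G = card (labelled_copies (snd graph_M) G)"
  proof (rule num_copies_eq_card_labelled_copies)
    fix t assume "t \<in> labelled_copies (snd graph_M) G"
    moreover obtain a b c d w where t: "t = (a, b, c, d, w)" by (cases t)
    ultimately have lab: "(a, b, c, d, w) \<in> labelled_M G" by (simp add: labelled_copies_graph_M)
    then have "distinct [a, b, c, d, w]" by (simp add: labelled_M_def)
    then show "card {y \<in> labelled_copies (snd graph_M) G.
        pattern_image (snd graph_M) y = pattern_image (snd graph_M) t} = 8"
      unfolding labelled_copies_graph_M t fibre_labelled_M[OF lab] by auto
  qed (simp_all add: graph_M_def assms)
  moreover have "({0..4}, snd graph_M) = graph_M" by (simp add: graph_M_def)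
  ultimately show ?thesis by (simp add: labelled_copies_graph_M)
qed

lemma fibre_labelled_M':
  assumes t: "(a, b, c, d, w) \<in> labelled_M' G"
  shows "{y \<in> labelled_M' G. pattern_image (snd graph_M') y = pattern_image (snd graph_M') (a, b, c, d, w)}
    = {(a, b, c, d, w), (c, b, a, d, w), (a, b, c, w, d), (c, b, a, w, d)}"
    (is "?F = ?orbit")
proof (intro equalityI subsetI)
  fix y assume y: "y \<in> ?F"
  obtain a' b' c' d' w' where y_eq: "y = (a', b', c', d', w')" by (cases y)
  from y t have dist: "distinct [a, b, c, d, w]" "distinct [a', b', c', d', w']"
    and E: "{{a', b'}, {b', c'}, {d', w'}} = {{a, b}, {b, c}, {d, w}}"
    by (auto simp: y_eq labelled_M'_def pattern_image_M')
  have mem: "x \<in> {{a', b'}, {b', c'}, {d', w'}} \<longleftrightarrow> x \<in> {{a, b}, {b, c}, {d, w}}" for x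
    using E by simp
  have ne: "{a, b} \<noteq> {b, c}" "{a, b} \<noteq> {d, w}" "{b, c} \<noteq> {d, w}"
    using dist by (auto simp: doubleton_eq_iff)
  have centre: "b' \<in> x" if "x \<in> {{a, b}, {b, c}, {d, w}}" and "x \<noteq> {d', w'}" for x
  proof -
    have "x = {a', b'} \<or> x = {b', c'}" using mem[of x] that by blast
    then show ?thesis by blast
  qed
  have dw: "{d', w'} = {d, w}"
  proof (rule ccontr)
    assume "{d', w'} \<noteq> {d, w}"
    moreover have "{d', w'} \<in> {{a, b}, {b, c}, {d, w}}" using mem[of "{d', w'}"] by blast
    ultimately have "{d', w'} = {a, b} \<or> {d', w'} = {b, c}" by auto
    then show False
    proof
      assume "{d', w'} = {a, b}"
      then have "b' \<in> {b, c}" "b' \<in> {d, w}" using centre[of "{b, c}"] centre[of "{d, w}"] ne by auto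
      then show False using dist by auto
    next
      assume "{d', w'} = {b, c}"
      then have "b' \<in> {a, b}" "b' \<in> {d, w}" using centre[of "{a, b}"] centre[of "{d, w}"] ne by auto
      then show False using dist by auto
    qed
  qed
  have "b' \<in> {a, b}" "b' \<in> {b, c}" using centre[of "{a, b}"] centre[of "{b, c}"] dw ne by auto
  then have bb: "b' = b" using dist by auto
  have "{a', b} \<in> {{a, b}, {b, c}, {d, w}}" "{b, c'} \<in> {{a, b}, {b, c}, {d, w}}"
    using mem[of "{a', b'}"] mem[of "{b', c'}"] bb by simp_all
  then have "a' \<in> {a, c}" "c' \<in> {a, c}" using dist by (auto simp: doubleton_eq_iff)
  moreover have "a' \<noteq> c'" using dist by auto
  moreover have "(d' = d \<and> w' = w) \<or> (d' = w \<and> w' = d)" using dw by (simp add: doubleton_eq_iff)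
  ultimately show "y \<in> ?orbit"
    using y_eq bb by auto
next
  fix y assume "y \<in> ?orbit"
  with t show "y \<in> ?F"
    by (auto simp: labelled_M'_def pattern_image_M' insert_commute)
qed

lemma num_copies_M':
  assumes "finite (fst G)"
  shows "4 * num_copies graph_M' G = card (labelled_M' G)"
proof -
  have "4 * num_copies ({0..4}, snd graph_M') G = card (labelled_copies (snd graph_M') G)"
  proof (rule num_copies_eq_card_labelled_copies)
    fix t assume "t \<in> labelled_copies (snd graph_M') G"
    moreover obtain a b c d w where t: "t = (a, b, c, d, w)" by (cases t)
    ultimately have lab: "(a, b, c, d, w) \<in> labelled_M' G" by (simp add: labelled_copies_graph_M')
    then have "distinct [a, b, c, d, w]" by (simp add: labelled_M'_def)
    then show "card {y \<in> labelled_copies (snd graph_M') G.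
        pattern_image (snd graph_M') y = pattern_image (snd graph_M') t} = 4"
      unfolding labelled_copies_graph_M' t fibre_labelled_M'[OF lab] by auto
  qed (simp_all add: graph_M'_def assms)
  moreover have "({0..4}, snd graph_M') = graph_M'" by (simp add: graph_M'_def)
  ultimately show ?thesis by (simp add: labelled_copies_graph_M')
qed

lemma dihedral_subset_fibre_labelled_C5:
  assumes t: "(a, b, c, d, w) \<in> labelled_C5 G"
  shows "{(a, b, c, d, w), (b, c, d, w, a), (c, d, w, a, b), (d, w, a, b, c), (w, a, b, c, d),
      (a, w, d, c, b), (w, d, c, b, a), (d, c, b, a, w), (c, b, a, w, d), (b, a, w, d, c)}
    \<subseteq> {y \<in> labelled_C5 G.
        pattern_image (snd graph_C5) y = pattern_image (snd graph_C5) (a, b, c, d, w)}"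
    (is "_ \<subseteq> ?F")
proof -
  have rotate: "(b', c', d', w', a') \<in> ?F" if "(a', b', c', d', w') \<in> ?F" for a' b' c' d' w'
    using that by (simp add: labelled_C5_def pattern_image_C5 insert_commute) blast
  have reflect: "(a', w', d', c', b') \<in> ?F" if "(a', b', c', d', w') \<in> ?F" for a' b' c' d' w'
    using that by (simp add: labelled_C5_def pattern_image_C5 insert_commute) blast
  have r0: "(a, b, c, d, w) \<in> ?F" using t by simp
  have r1: "(b, c, d, w, a) \<in> ?F" by (rule rotate[OF r0])
  have r2: "(c, d, w, a, b) \<in> ?F" by (rule rotate[OF r1])
  have r3: "(d, w, a, b, c) \<in> ?F" by (rule rotate[OF r2])
  have r4: "(w, a, b, c, d) \<in> ?F" by (rule rotate[OF r3])
  have s0: "(a, w, d, c, b) \<in> ?F" by (rule reflect[OF r0])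
  have s1: "(w, d, c, b, a) \<in> ?F" by (rule rotate[OF s0])
  have s2: "(d, c, b, a, w) \<in> ?F" by (rule rotate[OF s1])
  have s3: "(c, b, a, w, d) \<in> ?F" by (rule rotate[OF s2])
  have s4: "(b, a, w, d, c) \<in> ?F" by (rule rotate[OF s3])
  show ?thesis using r0 r1 r2 r3 r4 s0 s1 s2 s3 s4 by (simp only: insert_subset empty_subsetI)
qed

lemma num_copies_C5_le:
  assumes "finite (fst G)"
  shows "10 * num_copies graph_C5 G \<le> card (labelled_C5 G)"
proof -
  have "10 * num_copies ({0..4}, snd graph_C5) G \<le> card (labelled_copies (snd graph_C5) G)"
  proof (rule num_copies_le_card_labelled_copies)
    fix t assume "t \<in> labelled_copies (snd graph_C5) G"
    moreover obtain a b c d w where t: "t = (a, b, c, d, w)" by (cases t)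
    ultimately have lab: "(a, b, c, d, w) \<in> labelled_C5 G" by (simp add: labelled_copies_graph_C5)
    then have "distinct [a, b, c, d, w]" by (simp add: labelled_C5_def)
    then have "10 = card {(a, b, c, d, w), (b, c, d, w, a), (c, d, w, a, b), (d, w, a, b, c),
        (w, a, b, c, d), (a, w, d, c, b), (w, d, c, b, a), (d, c, b, a, w), (c, b, a, w, d),
        (b, a, w, d, c)}"
      by auto
    also have "\<dots> \<le> card {y \<in> labelled_C5 G.
        pattern_image (snd graph_C5) y = pattern_image (snd graph_C5) (a, b, c, d, w)}"
    proof (rule card_mono[OF _ dihedral_subset_fibre_labelled_C5[OF lab]])
      have "finite (labelled_C5 G)"
        using finite_labelled_copies[OF assms, of "snd graph_C5"]
        by (simp add: labelled_copies_graph_C5)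
      then show "finite {y \<in> labelled_C5 G.
          pattern_image (snd graph_C5) y = pattern_image (snd graph_C5) (a, b, c, d, w)}"
        by (rule finite_subset[rotated]) blast
    qed
    finally show "10 \<le> card {y \<in> labelled_copies (snd graph_C5) G.
        pattern_image (snd graph_C5) y = pattern_image (snd graph_C5) t}"
      by (simp add: labelled_copies_graph_C5 t)
  qed (simp_all add: graph_C5_def assms)
  moreover have "({0..4}, snd graph_C5) = graph_C5" by (simp add: graph_C5_def)
  ultimately show ?thesis by (simp add: labelled_copies_graph_C5)
qed

section \<open>Degree counts in finite graphs\<close>

lemma four_mult_le_square_add:
  fixes x y :: nat
  shows "4 * (x * y) \<le> (x + y)^2"
proof -
  have "int (4 * (x * y)) \<le> int ((x + y)^2)"
    using zero_le_power2[of "int x - int y"] by (simp add: power2_eq_square algebra_simps)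
  then show ?thesis by linarith
qed

lemma mult_diff_le_quarter:
  fixes d n :: nat
  assumes "d \<le> n"
  shows "d * (n - d) \<le> n * n div 4"
proof -
  have "4 * (d * (n - d)) \<le> (d + (n - d))^2" by (rule four_mult_le_square_add)
  then show ?thesis using assms by (simp add: power2_eq_square)
qed

locale finite_graph =
  fixes V :: "'a set" and E :: "'a set set"
  assumes is_graph: "is_graph (V, E)"
begin

lemma finite_V: "finite V"
  using is_graph by (simp add: is_graph_def)

lemma edge_card: "e \<in> E \<Longrightarrow> card e = 2"
  using is_graph by (simp add: is_graph_def)

lemma edge_subset_V: "e \<in> E \<Longrightarrow> e \<subseteq> V"
  using is_graph by (simp add: is_graph_def)

lemma edge_neq: "{a, b} \<in> E \<Longrightarrow> a \<noteq> b"
  using edge_card[of "{a, b}"] by auto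

lemma edge_in_V: "{a, b} \<in> E \<Longrightarrow> a \<in> V \<and> b \<in> V"
  using edge_subset_V[of "{a, b}"] by simp

definition nbhd :: "'a \<Rightarrow> 'a set" where
  "nbhd a = {b. {a, b} \<in> E}"

definition degree :: "'a \<Rightarrow> nat" where
  "degree a = card (nbhd a)"

definition arcs :: "('a \<times> 'a) set" where
  "arcs = {(a, b). {a, b} \<in> E}"

lemma mem_nbhd [simp]: "b \<in> nbhd a \<longleftrightarrow> {a, b} \<in> E"
  by (simp add: nbhd_def)

lemma mem_arcs [simp]: "(a, b) \<in> arcs \<longleftrightarrow> {a, b} \<in> E"
  by (simp add: arcs_def)

lemma nbhd_subset: "nbhd a \<subseteq> V"
  by (auto dest: edge_in_V)

lemma finite_nbhd: "finite (nbhd a)"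
  using finite_subset[OF nbhd_subset finite_V] .

lemma not_mem_nbhd_self: "a \<notin> nbhd a"
  using edge_neq[of a a] by auto

lemma degree_le_card: "degree a \<le> card V"
  unfolding degree_def by (rule card_mono[OF finite_V nbhd_subset])

lemma arcs_eq_Sigma: "arcs = Sigma V nbhd"
  by (auto dest: edge_in_V)

lemma finite_arcs: "finite arcs"
  unfolding arcs_eq_Sigma using finite_V finite_nbhd by auto

lemma card_arcs: "card arcs = (\<Sum>a\<in>V. degree a)"
  unfolding arcs_eq_Sigma degree_def using finite_V finite_nbhd by simp

lemma swap_mem_arcs: "prod.swap p \<in> arcs \<longleftrightarrow> p \<in> arcs"
  by (cases p) (simp add: insert_commute)

lemma swap_arcs: "prod.swap ` arcs = arcs"
proof
  show "prod.swap ` arcs \<subseteq> arcs" using swap_mem_arcs by auto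
  show "arcs \<subseteq> prod.swap ` arcs"
    using swap_mem_arcs by (metis image_eqI subsetI swap_swap)
qed

lemma sum_arcs_fst: "(\<Sum>p\<in>arcs. f (fst p)) = (\<Sum>a\<in>V. of_nat (degree a) * f a)"
proof -
  have "(\<Sum>p\<in>arcs. f (fst p)) = (\<Sum>(a, b)\<in>Sigma V nbhd. f a)"
    unfolding arcs_eq_Sigma by (simp add: split_def)
  also have "\<dots> = (\<Sum>a\<in>V. \<Sum>b\<in>nbhd a. f a)"
    by (rule sum.Sigma[symmetric]) (use finite_V finite_nbhd in auto)
  finally show ?thesis by (simp add: degree_def)
qed

lemma sum_arcs_snd: "(\<Sum>p\<in>arcs. f (snd p)) = (\<Sum>p\<in>arcs. f (fst p))"
proof -
  have "(\<Sum>p\<in>arcs. f (snd p)) = (\<Sum>p\<in>prod.swap ` arcs. f (fst p))"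
    by (subst sum.reindex) (auto simp: inj_on_def)
  then show ?thesis unfolding swap_arcs .
qed

definition arcs_avoiding :: "'a \<Rightarrow> 'a \<Rightarrow> ('a \<times> 'a) set" where
  "arcs_avoiding a b = {q \<in> arcs. fst q \<notin> {a, b} \<and> snd q \<notin> {a, b}}"

lemma card_arcs_avoiding:
  assumes ab: "{a, b} \<in> E"
  shows "card (arcs_avoiding a b) + 2 * degree a + 2 * degree b = card arcs + 2"
proof -
  define X where "X = {q \<in> arcs. fst q \<in> {a, b}}"
  have "a \<noteq> b" using edge_neq[OF ab] .
  have X_eq: "X = {a} \<times> nbhd a \<union> {b} \<times> nbhd b"
    by (auto simp: X_def)
  have card_X: "card X = degree a + degree b"
    unfolding X_eq degree_def using \<open>a \<noteq> b\<close> finite_nbhd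
    by (subst card_Un_disjoint) (auto simp: card_cartesian_product)
  have card_swap_X: "card (prod.swap ` X) = card X"
    by (rule card_image[OF inj_swap])
  have "X \<inter> prod.swap ` X = {(a, b), (b, a)}"
    using ab edge_neq[of a a] edge_neq[of b b] by (auto simp: X_def insert_commute)
  then have card_Int: "card (X \<inter> prod.swap ` X) = 2"
    using \<open>a \<noteq> b\<close> by simp
  have "X \<union> prod.swap ` X = arcs - arcs_avoiding a b"
    by (auto simp: X_def arcs_avoiding_def insert_commute)
  moreover have "finite X"
    unfolding X_eq using finite_nbhd by simp
  ultimately have "card (arcs - arcs_avoiding a b) + 2 = 2 * degree a + 2 * degree b"
    using card_Un_Int[of X "prod.swap ` X"] card_X card_swap_X card_Int by simp
  moreover have "card (arcs - arcs_avoiding a b) + card (arcs_avoiding a b) = card arcs"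
  proof -
    have sub: "arcs_avoiding a b \<subseteq> arcs" by (auto simp: arcs_avoiding_def)
    show ?thesis
      using card_Diff_subset[OF finite_subset[OF sub finite_arcs] sub] card_mono[OF finite_arcs sub]
      by simp
  qed
  ultimately show ?thesis by linarith
qed

definition disjoint_arc_pairs :: "(('a \<times> 'a) \<times> ('a \<times> 'a)) set" where
  "disjoint_arc_pairs = (SIGMA p:arcs. arcs_avoiding (fst p) (snd p))"

lemma finite_disjoint_arc_pairs: "finite disjoint_arc_pairs"
  unfolding disjoint_arc_pairs_def arcs_avoiding_def using finite_arcs by auto

lemma card_disjoint_arc_pairs:
  "real (card disjoint_arc_pairs)
     = real (card arcs) * (real (card arcs) + 2) - 4 * (\<Sum>a\<in>V. real (degree a)^2)"
proof -
  have "real (card disjoint_arc_pairs) = (\<Sum>p\<in>arcs. real (card (arcs_avoiding (fst p) (snd p))))"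
    unfolding disjoint_arc_pairs_def arcs_avoiding_def using finite_arcs
    by (simp add: card_SigmaI of_nat_sum)
  also have "\<dots> = (\<Sum>p\<in>arcs.
      real (card arcs) + 2 - 2 * real (degree (fst p)) - 2 * real (degree (snd p)))"
  proof (rule sum.cong[OF refl])
    fix p assume "p \<in> arcs"
    then have "card (arcs_avoiding (fst p) (snd p)) + 2 * degree (fst p) + 2 * degree (snd p)
        = card arcs + 2"
      by (intro card_arcs_avoiding) (cases p, simp)
    then show "real (card (arcs_avoiding (fst p) (snd p)))
        = real (card arcs) + 2 - 2 * real (degree (fst p)) - 2 * real (degree (snd p))"
      by (simp add: algebra_simps flip: of_nat_add of_nat_mult)
  qed
  also have "\<dots> = real (card arcs) * (real (card arcs) + 2)
      - 2 * (\<Sum>p\<in>arcs. real (degree (fst p))) - 2 * (\<Sum>p\<in>arcs. real (degree (snd p)))"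
    by (simp add: sum_subtractf sum.distrib sum_distrib_left algebra_simps)
  also have "(\<Sum>p\<in>arcs. real (degree (snd p))) = (\<Sum>p\<in>arcs. real (degree (fst p)))"
    by (rule sum_arcs_snd)
  also have "(\<Sum>p\<in>arcs. real (degree (fst p))) = (\<Sum>a\<in>V. real (degree a)^2)"
    using sum_arcs_fst[of "\<lambda>a. real (degree a)"] by (simp add: power2_eq_square)
  finally show ?thesis by simp
qed

lemma labelled_M_eq_image:
  "labelled_M (V, E) = (\<lambda>(((a, b), (c, d)), w). (a, b, c, d, w)) `
     (SIGMA ((a, b), (c, d)):disjoint_arc_pairs. V - {a, b, c, d})"
proof (intro equalityI subsetI)
  fix t assume "t \<in> labelled_M (V, E)"
  then obtain a b c d w where t: "t = (a, b, c, d, w)" and "distinct [a, b, c, d, w]"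
    "{a, b, c, d, w} \<subseteq> V" "{a, b} \<in> E" "{c, d} \<in> E"
    unfolding labelled_M_def by auto
  then have "(((a, b), (c, d)), w) \<in> (SIGMA ((a, b), (c, d)):disjoint_arc_pairs. V - {a, b, c, d})"
    by (auto simp: disjoint_arc_pairs_def arcs_avoiding_def)
  then show "t \<in> (\<lambda>(((a, b), (c, d)), w). (a, b, c, d, w)) `
      (SIGMA ((a, b), (c, d)):disjoint_arc_pairs. V - {a, b, c, d})"
    unfolding t by force
next
  fix t assume "t \<in> (\<lambda>(((a, b), (c, d)), w). (a, b, c, d, w)) `
      (SIGMA ((a, b), (c, d)):disjoint_arc_pairs. V - {a, b, c, d})"
  then obtain x where x: "x \<in> (SIGMA ((a, b), (c, d)):disjoint_arc_pairs. V - {a, b, c, d})"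
    and t_x: "t = (\<lambda>(((a, b), (c, d)), w). (a, b, c, d, w)) x"
    by blast
  obtain a b c d w where x_eq: "x = (((a, b), (c, d)), w)"
    using prod.exhaust by metis
  have t: "t = (a, b, c, d, w)" and "((a, b), (c, d)) \<in> disjoint_arc_pairs"
    and w: "w \<in> V - {a, b, c, d}"
    using x t_x unfolding x_eq by auto
  then have "{a, b} \<in> E" "{c, d} \<in> E" "c \<notin> {a, b}" "d \<notin> {a, b}"
    by (auto simp: disjoint_arc_pairs_def arcs_avoiding_def)
  then show "t \<in> labelled_M (V, E)"
    using w edge_neq edge_in_V unfolding t labelled_M_def by auto
qed

lemma card_labelled_M: "card (labelled_M (V, E)) = (card V - 4) * card disjoint_arc_pairs"
proof -
  have "card (labelled_M (V, E))
      = card (SIGMA ((a, b), (c, d)):disjoint_arc_pairs. V - {a, b, c, d})"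
    unfolding labelled_M_eq_image by (rule card_image) (auto simp: inj_on_def)
  also have "\<dots> = (\<Sum>((a, b), (c, d))\<in>disjoint_arc_pairs. card (V - {a, b, c, d}))"
    using finite_disjoint_arc_pairs finite_V by (subst card_SigmaI) (auto simp: split_def)
  also have "\<dots> = (\<Sum>p\<in>disjoint_arc_pairs. card V - 4)"
  proof (rule sum.cong[OF refl])
    fix p assume "p \<in> disjoint_arc_pairs"
    then obtain a b c d where p: "p = ((a, b), (c, d))" and "{a, b} \<in> E" "{c, d} \<in> E"
      "c \<notin> {a, b}" "d \<notin> {a, b}"
      by (auto simp: disjoint_arc_pairs_def arcs_avoiding_def)
    then have "card (V - {a, b, c, d}) = card V - 4"
      using edge_neq edge_in_V finite_V by (subst card_Diff_subset) auto
    then show "(\<lambda>((a, b), (c, d)). card (V - {a, b, c, d})) p = card V - 4"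
      unfolding p by simp
  qed
  finally show ?thesis by simp
qed

lemma num_copies_M_eq:
  assumes "card V \<ge> 4"
  shows "8 * real (num_copies graph_M (V, E)) = (real (card V) - 4)
    * (real (card arcs) * (real (card arcs) + 2) - 4 * (\<Sum>a\<in>V. real (degree a)^2))"
proof -
  have "8 * num_copies graph_M (V, E) = (card V - 4) * card disjoint_arc_pairs"
    using num_copies_M[of "(V, E)"] finite_V card_labelled_M by simp
  then have "8 * real (num_copies graph_M (V, E))
      = real (card V - 4) * real (card disjoint_arc_pairs)"
    by (metis of_nat_mult of_nat_numeral)
  then show ?thesis
    using assms by (simp add: card_disjoint_arc_pairs of_nat_diff)
qed

lemma card_arcs_square_le:
  "real (card arcs)^2 \<le> real (card V) * (\<Sum>a\<in>V. real (degree a)^2)"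
proof -
  have "(\<Sum>a\<in>V. real (degree a) * 1)^2 \<le> (\<Sum>a\<in>V. real (degree a)^2) * (\<Sum>a\<in>V. 1^2)"
    by (rule Cauchy_Schwarz_ineq_sum)
  then show ?thesis
    unfolding card_arcs of_nat_sum by (simp add: mult.commute)
qed

lemma sum_degree_mult_complement_le:
  "real (card V) * real (card arcs) - (\<Sum>a\<in>V. real (degree a)^2)
     \<le> real (card V) * real (card V * card V div 4)"
proof -
  have "real (card V) * real (card arcs) - (\<Sum>a\<in>V. real (degree a)^2)
      = (\<Sum>a\<in>V. real (degree a * (card V - degree a)))"
    using degree_le_card
    by (simp add: card_arcs sum_distrib_left sum_subtractf power2_eq_square algebra_simps
        of_nat_diff)
  also have "\<dots> \<le> (\<Sum>a\<in>V. real (card V * card V div 4))"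
    by (intro sum_mono of_nat_mono mult_diff_le_quarter degree_le_card)
  finally show ?thesis by simp
qed

end

section \<open>Triangle-free graphs\<close>

locale triangle_free_graph = finite_graph +
  assumes triangle_free: "triangle_free (V, E)"
begin

lemma no_triangle: "{a, b} \<in> E \<Longrightarrow> {b, c} \<in> E \<Longrightarrow> {a, c} \<in> E \<Longrightarrow> False"
  using triangle_free edge_neq[of a b] edge_neq[of b c] edge_neq[of a c]
  unfolding triangle_free_def snd_conv by blast

lemma nbhd_disjoint: "{a, b} \<in> E \<Longrightarrow> nbhd a \<inter> nbhd b = {}"
  using no_triangle[of a b] by (force simp: insert_commute)

lemma degree_add_le_card:
  assumes "{a, b} \<in> E"
  shows "degree a + degree b \<le> card V"
proof -
  have "degree a + degree b = card (nbhd a \<union> nbhd b)"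
    unfolding degree_def using finite_nbhd nbhd_disjoint[OF assms] by (simp add: card_Un_disjoint)
  also have "\<dots> \<le> card V"
    using nbhd_subset by (intro card_mono[OF finite_V]) auto
  finally show ?thesis .
qed

lemma card_labelled_M'_eq:
  "2 * card (labelled_M' (V, E))
     = card {(a, b, c, d, w). (a, b, c, d, w) \<in> labelled_M (V, E) \<and> ({a, w} \<in> E \<or> {b, w} \<in> E)}"
proof -
  define Ma where "Ma = {(a, b, c, d, w). (a, b, c, d, w) \<in> labelled_M (V, E) \<and> {a, w} \<in> E}"
  define Mb where "Mb = {(a, b, c, d, w). (a, b, c, d, w) \<in> labelled_M (V, E) \<and> {b, w} \<in> E}"
  define f :: "'a quint \<Rightarrow> 'a quint" where "f = (\<lambda>(a, b, c, d, w). (a, b, d, w, c))"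
  define g :: "'a quint \<Rightarrow> 'a quint" where "g = (\<lambda>(a, b, c, d, w). (b, a, c, d, w))"
  have "f ` labelled_M' (V, E) = Mb"
  proof (intro equalityI subsetI)
    fix x assume "x \<in> f ` labelled_M' (V, E)"
    then obtain a b c d w where "x = (a, b, d, w, c)" "(a, b, c, d, w) \<in> labelled_M' (V, E)"
      by (auto simp: f_def)
    then show "x \<in> Mb" by (auto simp: Mb_def labelled_M_def labelled_M'_def)
  next
    fix x assume x: "x \<in> Mb"
    obtain a b d w c where x_eq: "x = (a, b, d, w, c)" by (cases x)
    have "(a, b, c, d, w) \<in> labelled_M' (V, E)"
      using x unfolding x_eq Mb_def labelled_M_def labelled_M'_def by auto
    then show "x \<in> f ` labelled_M' (V, E)" unfolding x_eq f_def by force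
  qed
  moreover have "inj_on f (labelled_M' (V, E))" by (auto simp: f_def inj_on_def)
  ultimately have card_Mb: "card Mb = card (labelled_M' (V, E))" by (metis card_image)
  have "g ` Mb = Ma"
  proof (intro equalityI subsetI)
    fix x assume "x \<in> g ` Mb"
    then obtain a b c d w where "x = (b, a, c, d, w)" "(a, b, c, d, w) \<in> Mb"
      by (auto simp: g_def)
    then show "x \<in> Ma" by (auto simp: Ma_def Mb_def labelled_M_def insert_commute)
  next
    fix x assume x: "x \<in> Ma"
    obtain b a c d w where x_eq: "x = (b, a, c, d, w)" by (cases x)
    have "(a, b, c, d, w) \<in> Mb"
      using x unfolding x_eq Ma_def Mb_def labelled_M_def by (auto simp: insert_commute)
    then show "x \<in> g ` Mb" unfolding x_eq g_def by force
  qed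
  moreover have "inj_on g Mb" by (auto simp: g_def inj_on_def)
  ultimately have card_Ma: "card Ma = card Mb" by (metis card_image)
  have "Ma \<inter> Mb = {}"
    using no_triangle unfolding Ma_def Mb_def labelled_M_def by (auto simp: insert_commute)
  moreover have "finite Ma" "finite Mb"
  proof -
    have "Ma \<subseteq> labelled_M (V, E)" "Mb \<subseteq> labelled_M (V, E)"
      unfolding Ma_def Mb_def by auto
    then show "finite Ma" "finite Mb"
      using finite_labelled_M[of "(V, E)"] finite_V by (auto intro: finite_subset)
  qed
  moreover have "Ma \<union> Mb
      = {(a, b, c, d, w). (a, b, c, d, w) \<in> labelled_M (V, E) \<and> ({a, w} \<in> E \<or> {b, w} \<in> E)}"
    unfolding Ma_def Mb_def by auto
  ultimately show ?thesis
    using card_Un_disjoint[of Ma Mb] card_Ma card_Mb by simp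
qed

lemma num_copies_M'_le_M: "num_copies graph_M' (V, E) \<le> num_copies graph_M (V, E)"
proof -
  have "2 * card (labelled_M' (V, E)) \<le> card (labelled_M (V, E))"
    unfolding card_labelled_M'_eq
    by (rule card_mono[OF finite_labelled_M]) (auto simp: finite_V)
  then show ?thesis
    using num_copies_M[of "(V, E)"] num_copies_M'[of "(V, E)"] finite_V by simp
qed

lemma card_non_nbhds:
  assumes "{a, b} \<in> E"
  shows "card (V - (nbhd a \<union> nbhd b)) = card V - degree a - degree b"
proof -
  have "card (nbhd a \<union> nbhd b) = degree a + degree b"
    unfolding degree_def using finite_nbhd nbhd_disjoint[OF assms] by (simp add: card_Un_disjoint)
  then show ?thesis
    using finite_nbhd nbhd_subset by (simp add: card_Diff_subset)
qed

lemma card_common_nbhds_le: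
  assumes ab: "{a, b} \<in> E" and d: "d \<in> V - (nbhd a \<union> nbhd b)"
  shows "4 * (card (nbhd b \<inter> nbhd d) * card (nbhd a \<inter> nbhd d)) \<le> (card V - 3)^2"
proof -
  have "a \<noteq> b" "a \<in> V" "b \<in> V" using edge_neq[OF ab] edge_in_V[OF ab] by auto
  moreover have "d \<noteq> a" "d \<noteq> b" using ab d by (auto simp: insert_commute)
  ultimately have card_V3: "card (V - {a, b, d}) = card V - 3"
    using d finite_V by (subst card_Diff_subset) auto
  have "(nbhd b \<inter> nbhd d) \<union> (nbhd a \<inter> nbhd d) \<subseteq> V - {a, b, d}"
    using nbhd_subset not_mem_nbhd_self d by (auto simp: insert_commute)
  moreover have "(nbhd b \<inter> nbhd d) \<inter> (nbhd a \<inter> nbhd d) = {}"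
    using nbhd_disjoint[OF ab] by auto
  ultimately have "card (nbhd b \<inter> nbhd d) + card (nbhd a \<inter> nbhd d) \<le> card V - 3"
    using finite_nbhd card_mono[of "V - {a, b, d}"] finite_V card_V3
    by (simp add: card_Un_disjoint[symmetric])
  then have "(card (nbhd b \<inter> nbhd d) + card (nbhd a \<inter> nbhd d))^2 \<le> (card V - 3)^2"
    by (rule power_mono) simp
  then show ?thesis
    using four_mult_le_square_add order_trans by blast
qed

definition C5_frames :: "(('a \<times> 'a) \<times> 'a \<times> 'a \<times> 'a) set" where
  "C5_frames = (SIGMA (a, b):arcs. SIGMA d:V - (nbhd a \<union> nbhd b).
     (nbhd b \<inter> nbhd d) \<times> (nbhd a \<inter> nbhd d))"

lemma labelled_C5_subset_image_frames:
  "labelled_C5 (V, E) \<subseteq> (\<lambda>((a, b), d, c, w). (a, b, c, d, w)) ` C5_frames"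
proof
  fix t assume "t \<in> labelled_C5 (V, E)"
  then obtain a b c d w where t: "t = (a, b, c, d, w)" and "{a, b, c, d, w} \<subseteq> V"
    and E: "{a, b} \<in> E" "{b, c} \<in> E" "{c, d} \<in> E" "{d, w} \<in> E" "{w, a} \<in> E"
    unfolding labelled_C5_def by auto
  have "d \<notin> nbhd a"
    using no_triangle[of a d w] E by (auto simp: insert_commute)
  moreover have "d \<notin> nbhd b"
    using no_triangle[of b c d] E by auto
  ultimately have "((a, b), d, c, w) \<in> C5_frames"
    using E \<open>{a, b, c, d, w} \<subseteq> V\<close> by (auto simp: C5_frames_def insert_commute)
  then show "t \<in> (\<lambda>((a, b), d, c, w). (a, b, c, d, w)) ` C5_frames"
    unfolding t by force
qed

lemma card_labelled_C5_le:
  "4 * card (labelled_C5 (V, E))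
     \<le> (card V - 3)^2 * (\<Sum>p\<in>arcs. card V - degree (fst p) - degree (snd p))"
proof -
  have finite_frames: "finite C5_frames"
    unfolding C5_frames_def using finite_arcs finite_V finite_nbhd by auto
  have "card (labelled_C5 (V, E)) \<le> card C5_frames"
    by (rule le_trans[OF card_mono[OF finite_imageI[OF finite_frames]
          labelled_C5_subset_image_frames] card_image_le[OF finite_frames]])
  also have "card C5_frames = (\<Sum>(a, b)\<in>arcs. \<Sum>d\<in>V - (nbhd a \<union> nbhd b).
      card (nbhd b \<inter> nbhd d) * card (nbhd a \<inter> nbhd d))"
    unfolding C5_frames_def using finite_arcs finite_V finite_nbhd
    by (subst card_SigmaI) (auto simp: split_def intro!: sum.cong card_SigmaI)
  finally have "4 * card (labelled_C5 (V, E))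
      \<le> 4 * (\<Sum>(a, b)\<in>arcs. \<Sum>d\<in>V - (nbhd a \<union> nbhd b).
        card (nbhd b \<inter> nbhd d) * card (nbhd a \<inter> nbhd d))"
    by simp
  also have "\<dots> = (\<Sum>(a, b)\<in>arcs. \<Sum>d\<in>V - (nbhd a \<union> nbhd b).
      4 * (card (nbhd b \<inter> nbhd d) * card (nbhd a \<inter> nbhd d)))"
    by (simp add: sum_distrib_left split_def)
  also have "\<dots> \<le> (\<Sum>(a, b)\<in>arcs. \<Sum>d\<in>V - (nbhd a \<union> nbhd b). (card V - 3)^2)"
    by (intro sum_mono) (auto intro!: sum_mono card_common_nbhds_le simp del: sum_constant)
  also have "\<dots> = (\<Sum>p\<in>arcs. (card V - 3)^2 * (card V - degree (fst p) - degree (snd p)))"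
    by (intro sum.cong refl) (auto simp: card_non_nbhds)
  finally show ?thesis by (simp add: sum_distrib_left)
qed

lemma sum_arcs_non_nbhds:
  "real (\<Sum>p\<in>arcs. card V - degree (fst p) - degree (snd p))
     = real (card V) * real (card arcs) - 2 * (\<Sum>a\<in>V. real (degree a)^2)"
proof -
  have "real (\<Sum>p\<in>arcs. card V - degree (fst p) - degree (snd p))
      = (\<Sum>p\<in>arcs. real (card V) - real (degree (fst p)) - real (degree (snd p)))"
    unfolding of_nat_sum
  proof (intro sum.cong refl)
    fix p assume "p \<in> arcs"
    then have "degree (fst p) + degree (snd p) \<le> card V"
      by (cases p) (simp add: degree_add_le_card)
    then show "real (card V - degree (fst p) - degree (snd p))
        = real (card V) - real (degree (fst p)) - real (degree (snd p))"
      by (simp add: of_nat_diff)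
  qed
  also have "\<dots> = real (card V) * real (card arcs)
      - (\<Sum>p\<in>arcs. real (degree (fst p))) - (\<Sum>p\<in>arcs. real (degree (snd p)))"
    by (simp add: sum_subtractf)
  also have "(\<Sum>p\<in>arcs. real (degree (snd p))) = (\<Sum>p\<in>arcs. real (degree (fst p)))"
    by (rule sum_arcs_snd)
  also have "(\<Sum>p\<in>arcs. real (degree (fst p))) = (\<Sum>a\<in>V. real (degree a)^2)"
    using sum_arcs_fst[of "\<lambda>a. real (degree a)"] by (simp add: power2_eq_square)
  finally show ?thesis by simp
qed

end

section \<open>The polynomial inequality\<close>

lemma cubic_bound:
  fixes n E :: real
  assumes n: "n \<ge> 5" and E: "n^2 - 1 \<le> 4 * E"
  shows "n * (n^2 + 4 * n - 31) \<le> 10 * (n - 4) * (E + n^2 / 5 + 1 - n)"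
proof -
  have "10 * (n - 4) * ((n^2 - 1) / 4 + n^2 / 5 + 1 - n) \<le> 10 * (n - 4) * (E + n^2 / 5 + 1 - n)"
    using n E by (intro mult_left_mono) auto
  moreover have "10 * (n - 4) * ((n^2 - 1) / 4 + n^2 / 5 + 1 - n) - n * (n^2 + 4 * n - 31)
      = (n - 5) * (n * (7 / 2 * n - 29 / 2) + 6)"
    by (simp add: power2_eq_square field_simps)
  moreover have "0 \<le> (n - 5) * (n * (7 / 2 * n - 29 / 2) + 6)"
    using n by simp
  ultimately show ?thesis by linarith
qed

lemma excess_bound_many_edges:
  fixes n E e Q :: real
  assumes n: "n \<ge> 5" and E: "n^2 - 1 \<le> 4 * E" and large: "n^2 / 5 \<le> e"
    and Q: "0 \<le> Q" "Q \<le> n * (E - e)"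
  shows "Q * (n^2 + 4 * n - 31) \<le> 10 * (n - 4) * (E - e) * (E + e + 1 - n)"
proof -
  have K: "n^2 + 4 * n - 31 > 0"
    using n mult_mono[OF n n] by (simp add: power2_eq_square)
  have "0 \<le> n * (E - e)" using Q by linarith
  then have De: "0 \<le> E - e" using n by (simp add: zero_le_mult_iff)
  have "Q * (n^2 + 4 * n - 31) \<le> n * (E - e) * (n^2 + 4 * n - 31)"
    using Q K by (intro mult_right_mono) auto
  also have "\<dots> = (E - e) * (n * (n^2 + 4 * n - 31))" by simp
  also have "\<dots> \<le> (E - e) * (10 * (n - 4) * (E + n^2 / 5 + 1 - n))"
    using cubic_bound[OF n E] De by (intro mult_left_mono)
  also have "\<dots> \<le> (E - e) * (10 * (n - 4) * (E + e + 1 - n))"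
    using large De n by (intro mult_left_mono) auto
  finally show ?thesis by (simp add: algebra_simps)
qed

lemma excess_bound_few_edges:
  fixes n E e Q :: real
  assumes n: "n \<ge> 5" and E: "n^2 - 1 \<le> 4 * E" and small: "e < n^2 / 5" and e: "0 \<le> e"
    and Q: "n * Q \<le> e * (n^2 - 4 * e)"
  shows "Q * (n^2 + 4 * n - 31) \<le> 10 * (n - 4) * (E - e) * (E + e + 1 - n)"
proof -
  define K where "K = n^2 + 4 * n - 31"
  have n25: "n^2 \<ge> 25" using n mult_mono[OF n n] by (simp add: power2_eq_square)
  then have K: "K > 0" unfolding K_def using n by simp
  have De: "E - e \<ge> 1" using small E n25 by simp
  have "e * (n^2 - 4 * e) \<le> e * (5 * (E - e))"
    using E De e by (intro mult_left_mono) auto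
  then have nQ: "n * Q \<le> 5 * e * (E - e)" using Q by (simp add: algebra_simps)
  have E1: "E + 1 - n \<ge> 0"
  proof -
    have "(n - 1) * (n - 3) \<ge> 0" using n by simp
    then show ?thesis using E by (simp add: power2_eq_square algebra_simps)
  qed
  have lin: "e * K \<le> 2 * n * (n - 4) * (E + e + 1 - n)"
  proof (cases "K \<le> 2 * n * (n - 4)")
    case True
    then have "e * (K - 2 * n * (n - 4)) \<le> 0" using e by (simp add: mult_nonneg_nonpos)
    moreover have "0 \<le> 2 * n * (n - 4) * (E + 1 - n)" using n E1 by simp
    ultimately show ?thesis by (simp add: algebra_simps)
  next
    case False
    have "e * (K - 2 * n * (n - 4)) \<le> (n^2 / 5) * (K - 2 * n * (n - 4))"
      using False small by (intro mult_right_mono) auto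
    also have "\<dots> \<le> 2 * n * (n - 4) * (E + 1 - n)"
    proof -
      have "n * (n * K) \<le> n * (10 * (n - 4) * (E + n^2 / 5 + 1 - n))"
        using cubic_bound[OF n E] n unfolding K_def by (intro mult_left_mono) auto
      then show ?thesis by (simp add: power2_eq_square algebra_simps)
    qed
    finally show ?thesis by (simp add: algebra_simps)
  qed
  have "n * (Q * K) \<le> (5 * e * (E - e)) * K"
    using nQ K by (simp add: mult.assoc[symmetric] mult_right_mono)
  also have "\<dots> = 5 * (E - e) * (e * K)" by simp
  also have "\<dots> \<le> 5 * (E - e) * (2 * n * (n - 4) * (E + e + 1 - n))"
    using lin De by (intro mult_left_mono) auto
  also have "\<dots> = n * (10 * (n - 4) * (E - e) * (E + e + 1 - n))" by (simp add: algebra_simps)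
  finally show ?thesis using n unfolding K_def by simp
qed

lemma M_C5_polynomial_inequality:
  fixes n A S E :: real
  assumes n: "n \<ge> 5" and cauchy: "A^2 \<le> n * S" and complement: "n * A - S \<le> n * E"
    and nonneg: "2 * S \<le> n * A" and E: "n^2 - 1 \<le> 4 * E" and A: "0 \<le> A"
  shows "5 * ((n - 4) * (A * (A + 2) - 4 * S)) + (n - 3)^2 * (n * A - 2 * S)
    \<le> 5 * ((n - 4) * (2 * E * (2 * E + 2) - 4 * n * E))"
proof -
  define e where "e = A / 2"
  define Q where "Q = n * e - S"
  have excess: "Q * (n^2 + 4 * n - 31) \<le> 10 * (n - 4) * (E - e) * (E + e + 1 - n)"
  proof (cases "n^2 / 5 \<le> e")
    case True
    show ?thesis
      by (rule excess_bound_many_edges[OF n E True])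
        (use nonneg complement in \<open>simp_all add: Q_def e_def algebra_simps\<close>)
  next
    case False
    show ?thesis
      by (rule excess_bound_few_edges[OF n E])
        (use False A cauchy in \<open>simp_all add: Q_def e_def power2_eq_square algebra_simps\<close>)
  qed
  have "5 * ((n - 4) * (2 * E * (2 * E + 2) - 4 * n * E))
      - (5 * ((n - 4) * (A * (A + 2) - 4 * S)) + (n - 3)^2 * (n * A - 2 * S))
      = 2 * (10 * (n - 4) * (E - e) * (E + e + 1 - n) - Q * (n^2 + 4 * n - 31))"
    unfolding e_def Q_def by (simp add: power2_eq_square algebra_simps)
  also have "\<dots> \<ge> 0" using excess by simp
  finally show ?thesis by simp
qed

lemma div_2_mult_eq_quarter:
  fixes n :: nat
  shows "n div 2 * (n - n div 2) = n * n div 4"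
proof (cases "even n")
  case True
  then obtain k where "n = 2 * k" by blast
  then show ?thesis by simp
next
  case False
  then obtain k where k: "n = 2 * k + 1" using oddE by blast
  have "n * n div 4 = k * k + k" unfolding k by (simp add: algebra_simps)
  moreover have "n div 2 = k" unfolding k by simp
  ultimately show ?thesis unfolding k by (simp add: algebra_simps)
qed

lemma square_le_four_quarter: "real n ^ 2 - 1 \<le> 4 * real (n * n div 4)"
proof (cases "even n")
  case True
  then obtain k where "n = 2 * k" by blast
  then show ?thesis by (simp add: power2_eq_square)
next
  case False
  then obtain k where k: "n = 2 * k + 1" using oddE by blast
  have "n * n div 4 = k * k + k" unfolding k by (simp add: algebra_simps)
  then show ?thesis unfolding k by (simp add: power2_eq_square algebra_simps)
qed

(* N(M,T2(n)): n - 4 choices of the isolated vertex times the q(q+1-n)/2 pairs of disjoint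
   edges among the q = n*n div 4 edges of T2(n). *)
definition T2_M_count :: "nat \<Rightarrow> real" where
  "T2_M_count n = (real n - 4) * real (n * n div 4) * (real (n * n div 4) + 1 - real n) / 2"

lemma T2_M_count_eq:
  "8 * T2_M_count n = (real n - 4) * (2 * real (n * n div 4) * (2 * real (n * n div 4) + 2)
     - 4 * real n * real (n * n div 4))"
  unfolding T2_M_count_def by (simp add: field_simps)

context triangle_free_graph
begin

lemma num_copies_M_C5_le_T2_M_count:
  assumes n: "card V \<ge> 5"
  shows "real (num_copies graph_M (V, E)) + real (num_copies graph_C5 (V, E))
    \<le> T2_M_count (card V)"
proof -
  define n where "n = real (card V)"
  define A where "A = real (card arcs)"
  define S where "S = (\<Sum>a\<in>V. real (degree a)^2)"
  define q where "q = real (card V * card V div 4)"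
  have M: "8 * real (num_copies graph_M (V, E)) = (n - 4) * (A * (A + 2) - 4 * S)"
    using num_copies_M_eq n unfolding n_def A_def S_def by simp
  have "40 * num_copies graph_C5 (V, E) \<le> 4 * card (labelled_C5 (V, E))"
    using num_copies_C5_le[of "(V, E)"] finite_V by simp
  also have "\<dots> \<le> (card V - 3)^2 * (\<Sum>p\<in>arcs. card V - degree (fst p) - degree (snd p))"
    by (rule card_labelled_C5_le)
  finally have "real (40 * num_copies graph_C5 (V, E))
      \<le> real ((card V - 3)^2 * (\<Sum>p\<in>arcs. card V - degree (fst p) - degree (snd p)))"
    by (rule of_nat_mono)
  also have "\<dots> = (n - 3)^2 * (n * A - 2 * S)"
    using n unfolding of_nat_mult sum_arcs_non_nbhds by (simp add: n_def A_def S_def of_nat_diff)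
  finally have C5: "40 * real (num_copies graph_C5 (V, E)) \<le> (n - 3)^2 * (n * A - 2 * S)"
    by simp
  have "5 * ((n - 4) * (A * (A + 2) - 4 * S)) + (n - 3)^2 * (n * A - 2 * S)
      \<le> 5 * ((n - 4) * (2 * q * (2 * q + 2) - 4 * n * q))"
  proof (rule M_C5_polynomial_inequality)
    show "n \<ge> 5" using n unfolding n_def by simp
    show "A^2 \<le> n * S" using card_arcs_square_le unfolding n_def A_def S_def .
    show "n * A - S \<le> n * q" using sum_degree_mult_complement_le unfolding n_def A_def S_def q_def .
    show "2 * S \<le> n * A"
      using sum_arcs_non_nbhds of_nat_0_le_iff[of "\<Sum>p\<in>arcs. card V - degree (fst p) - degree (snd p)"]
      unfolding n_def A_def S_def by linarith
    show "n^2 - 1 \<le> 4 * q" using square_le_four_quarter unfolding n_def q_def .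
  qed (simp add: A_def)
  then show ?thesis
    using M C5 T2_M_count_eq[of "card V", folded n_def q_def] by linarith
qed

end

section \<open>The balanced complete bipartite graph\<close>

lemma mem_T2_edges:
  "{x, y} \<in> snd (T2 n) \<longleftrightarrow>
     x < n \<and> y < n \<and> (x < n div 2 \<and> n div 2 \<le> y \<or> y < n div 2 \<and> n div 2 \<le> x)"
  unfolding T2_def by (auto simp: doubleton_eq_iff)

lemma is_graph_T2: "is_graph (T2 n)"
  unfolding is_graph_def by (auto simp: T2_def)

lemma triangle_free_T2: "triangle_free (T2 n)"
  unfolding triangle_free_def mem_T2_edges by auto

lemma pair_T2: "({..<n}, snd (T2 n)) = T2 n"
  by (simp add: T2_def)

interpretation T2: triangle_free_graph "{..<n}" "snd (T2 n)" for n
  using is_graph_T2[of n] triangle_free_T2[of n] by unfold_locales (simp_all add: pair_T2)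

lemma degree_T2: "a < n \<Longrightarrow> T2.degree n a = (if a < n div 2 then n - n div 2 else n div 2)"
proof -
  assume "a < n"
  then have "T2.nbhd n a = (if a < n div 2 then {n div 2..<n} else {..<n div 2})"
    by (auto simp: mem_T2_edges)
  then show ?thesis by (simp add: T2.degree_def)
qed

lemma sum_lessThan_split_half:
  fixes n :: nat
  shows "(\<Sum>a<n. f a) = (\<Sum>a<n div 2. f a) + (\<Sum>a\<in>{n div 2..<n}. f a)"
proof -
  have split: "{..<n} = {..<n div 2} \<union> {n div 2..<n}" by auto
  show ?thesis unfolding split by (rule sum.union_disjoint) auto
qed

lemma card_arcs_T2: "real (card (T2.arcs n)) = 2 * real (n * n div 4)"
proof -
  have "card (T2.arcs n) = (\<Sum>a<n div 2. T2.degree n a) + (\<Sum>a\<in>{n div 2..<n}. T2.degree n a)"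
    unfolding T2.card_arcs by (rule sum_lessThan_split_half)
  also have "\<dots> = (\<Sum>a<n div 2. n - n div 2) + (\<Sum>a\<in>{n div 2..<n}. n div 2)"
    by (intro arg_cong2[where f = "(+)"] sum.cong) (auto simp: degree_T2)
  finally show ?thesis by (simp flip: div_2_mult_eq_quarter)
qed

lemma sum_degree_square_T2: "(\<Sum>a<n. real (T2.degree n a)^2) = real n * real (n * n div 4)"
proof -
  have "(\<Sum>a<n. real (T2.degree n a)^2)
      = (\<Sum>a<n div 2. real (T2.degree n a)^2) + (\<Sum>a\<in>{n div 2..<n}. real (T2.degree n a)^2)"
    by (rule sum_lessThan_split_half)
  also have "\<dots> = (\<Sum>a<n div 2. real (n - n div 2)^2) + (\<Sum>a\<in>{n div 2..<n}. real (n div 2)^2)"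
    by (intro arg_cong2[where f = "(+)"] sum.cong) (auto simp: degree_T2)
  also have "\<dots> = (real (n div 2) + real (n - n div 2)) * real (n div 2 * (n - n div 2))"
    by (simp add: power2_eq_square algebra_simps)
  finally show ?thesis by (simp add: div_2_mult_eq_quarter)
qed

lemma num_copies_M_T2:
  assumes "n \<ge> 4"
  shows "real (num_copies graph_M (T2 n)) = T2_M_count n"
proof -
  have "8 * real (num_copies graph_M (T2 n)) = 8 * T2_M_count n"
    using T2.num_copies_M_eq[of n] assms
    by (simp add: card_arcs_T2 sum_degree_square_T2 T2_M_count_eq mult.assoc pair_T2)
  then show ?thesis by simp
qed

lemma num_copies_M'_T2: "num_copies graph_M' (T2 n) = num_copies graph_M (T2 n)"
proof -
  have adjacent: "{a, w} \<in> snd (T2 n) \<or> {b, w} \<in> snd (T2 n)"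
    if "(a, b, c, d, w) \<in> labelled_M (T2 n)" for a b c d w
  proof -
    have "{a, b} \<in> snd (T2 n)" "w < n" "w \<noteq> a" "w \<noteq> b"
      using that by (auto simp: labelled_M_def T2_def)
    then show ?thesis unfolding mem_T2_edges by auto
  qed
  then have "{(a, b, c, d, w). (a, b, c, d, w) \<in> labelled_M (T2 n) \<and>
      ({a, w} \<in> snd (T2 n) \<or> {b, w} \<in> snd (T2 n))} = labelled_M (T2 n)"
    using adjacent by blast
  then have "2 * card (labelled_M' (T2 n)) = card (labelled_M (T2 n))"
    using T2.card_labelled_M'_eq[of n] by (simp add: pair_T2)
  then show ?thesis
    using num_copies_M[of "T2 n"] num_copies_M'[of "T2 n"] by (simp add: T2_def)
qed

lemma num_copies_M_C5_le_T2:
  assumes G: "is_graph G" "fst G = {..<n}" "triangle_free G"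
  shows "num_copies graph_M G + num_copies graph_C5 G \<le> num_copies graph_M (T2 n)"
proof (cases "n < 5")
  case True
  have "card (fst graph_M) = 5" "card (fst graph_C5) = 5"
    by (simp_all add: graph_M_def graph_C5_def atLeastAtMost_0_4)
  then have "num_copies graph_M G = 0" "num_copies graph_C5 G = 0"
    using True G(2) by (simp_all add: num_copies_eq_0_if_card_less)
  then show ?thesis by simp
next
  case False
  obtain V E where G_eq: "G = (V, E)" by (cases G)
  interpret triangle_free_graph V E
    using G(1,3) unfolding G_eq by unfold_locales
  have "real (num_copies graph_M G) + real (num_copies graph_C5 G) \<le> T2_M_count n"
    using num_copies_M_C5_le_T2_M_count False G(2) unfolding G_eq by simp
  also have "\<dots> = real (num_copies graph_M (T2 n))"
    using False by (simp add: num_copies_M_T2)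
  finally show ?thesis by linarith
qed

lemma num_copies_M'_le_num_copies_M:
  assumes "is_graph G" "triangle_free G"
  shows "num_copies graph_M' G \<le> num_copies graph_M G"
proof -
  obtain V E where G_eq: "G = (V, E)" by (cases G)
  interpret triangle_free_graph V E
    using assms unfolding G_eq by unfold_locales
  show ?thesis using num_copies_M'_le_M unfolding G_eq .
qed

lemma finite_graphs_on: "finite {G :: 'a graph. is_graph G \<and> fst G = V}" if "finite V"
proof (rule finite_subset)
  show "{G :: 'a graph. is_graph G \<and> fst G = V} \<subseteq> {V} \<times> Pow (Pow V)"
    unfolding is_graph_def by auto
qed (use that in simp)

lemma ex2_K3_eqI:
  assumes "is_graph G0" "fst G0 = {..<n}" "triangle_free G0"
    and "\<And>G. is_graph G \<Longrightarrow> fst G = {..<n} \<Longrightarrow> triangle_free G \<Longrightarrow>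
      num_copies H1 G + num_copies H2 G \<le> num_copies H1 G0 + num_copies H2 G0"
  shows "ex2_K3 n H1 H2 = num_copies H1 G0 + num_copies H2 G0"
  unfolding ex2_K3_def
proof (rule Max_eqI)
  have "{num_copies H1 G + num_copies H2 G | G. is_graph G \<and> fst G = {..<n} \<and> triangle_free G}
      \<subseteq> (\<lambda>G. num_copies H1 G + num_copies H2 G) ` {G. is_graph G \<and> fst G = {..<n}}"
    by auto
  then show "finite {num_copies H1 G + num_copies H2 G | G. is_graph G \<and> fst G = {..<n} \<and> triangle_free G}"
    by (rule finite_subset) (use finite_graphs_on[of "{..<n}"] in simp)
  show "num_copies H1 G0 + num_copies H2 G0
      \<in> {num_copies H1 G + num_copies H2 G | G. is_graph G \<and> fst G = {..<n} \<and> triangle_free G}"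
    using assms(1-3) by blast
qed (use assms(4) in blast)

theorem mainTheorem14:
  fixes n :: nat
  shows "ex2_K3 n graph_M graph_C5 = num_copies graph_M (T2 n) + num_copies graph_C5 (T2 n)
       \<and> ex2_K3 n graph_M' graph_C5 = num_copies graph_M' (T2 n) + num_copies graph_C5 (T2 n)"
proof
  have "fst (T2 n) = {..<n}" by (simp add: T2_def)
  note T2 = is_graph_T2[of n] this triangle_free_T2[of n]
  show "ex2_K3 n graph_M graph_C5 = num_copies graph_M (T2 n) + num_copies graph_C5 (T2 n)"
    by (rule ex2_K3_eqI[OF T2]) (use num_copies_M_C5_le_T2 in fastforce)
  show "ex2_K3 n graph_M' graph_C5 = num_copies graph_M' (T2 n) + num_copies graph_C5 (T2 n)"
  proof (rule ex2_K3_eqI[OF T2])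
    fix G :: "nat graph"
    assume G: "is_graph G" "fst G = {..<n}" "triangle_free G"
    then show "num_copies graph_M' G + num_copies graph_C5 G
        \<le> num_copies graph_M' (T2 n) + num_copies graph_C5 (T2 n)"
      using num_copies_M'_le_num_copies_M[of G] num_copies_M_C5_le_T2[OF G] num_copies_M'_T2[of n]
      by linarith
  qed
qed

end
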